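(* Let $t$ be a closed term and suppose $t\to_w^h a_s$ with $a_s$ a strict answer. Then (1) $t\to_y^k a_s$ for some $k\in\mathbb{N}$; and (2) $h\leq k$.
   Context: Terms: $t ::= x \mid \lambda x.t \mid t\,u \mid t[x\backslash u]$ ($t[x\backslash u]$ an explicit substitution binding $x$ in $t$; terms up to $\alpha$). Values $v ::= \lambda x.t$. Substitution contexts $S ::= \langle\cdot\rangle\mid S[x\backslash u]$. Weak contexts $W ::= \langle\cdot\rangle \mid W\,t \mid t\,W \mid t[x\backslash W] \mid W[x\backslash u]$. For a class of contexts $K$, $K\langle\langle t\rangle\rangle$ is plugging without capture of free variables of $t$. Root rules: $S\langle\lambda x.t\rangle u\mapsto_m S\langle t[x\backslash u]\rangle$; $K\langle\langle x\rangle\rangle[x\backslash u]\mapsto_{e_K} K\langle\langle u\rangle\rangle[x\backslash u]$; $t[x\backslash S\langle v\rangle]\mapsto_{gcv} S\langle t\rangle$ if $x\notin\mathrm{fv}(t)$. $\to_w$ is the union of the closures under weak contexts of $\mapsto_m$, $\mapsto_{e_W}$ ($K$ = weak contexts), $\mapsto_{gcv}$; $\to^h$ denotes exactly $h$ steps. Call-by-silly strategy: answers $a ::= v\mid a[x\backslash a']$; name contexts $N ::= \langle\cdot\rangle\mid N t\mid N[x\backslash t]$; auxiliary contexts $A ::= \langle\cdot\rangle\mid a[x\backslash A]\mid A[x\backslash t]$; silly contexts $Y ::= A\langle N\rangle$; $\to_{ym} := Y\langle\mapsto_m\rangle$; $\to_{yeAY} := A\langle\mapsto_{e_Y}\rangle$;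 $\to_{yeYN} := Y\langle\mapsto_{e_N}\rangle$; $\to_{ygcv}:=Y\langle\mapsto_{gcv}\rangle$; $\to_y$ is their union. Strict answers: $a_s ::= v\mid a_s[x\backslash a_s']$ with $x\in\mathrm{fv}(a_s)$. *)

theory Defs
  imports Main
begin

text \<open>Terms up to alpha-equivalence, represented with de Bruijn indices.
  Sub t u stands for the explicit substitution t[x\u], where x is bound in t
  (index 0 in t).\<close>

datatype trm = Var nat | Lam trm | App trm trm | Sub trm trm

fun lift :: "nat \<Rightarrow> nat \<Rightarrow> trm \<Rightarrow> trm" where
  "lift k c (Var i) = (if i < c then Var i else Var (i + k))"
| "lift k c (Lam t) = Lam (lift k (Suc c) t)"
| "lift k c (App t u) = App (lift k c t) (lift k c u)"
| "lift k c (Sub t u) = Sub (lift k (Suc c) t) (lift k c u)"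

text \<open>lower c t: remove the (unused) free index c, decrementing larger ones.\<close>
fun lower :: "nat \<Rightarrow> trm \<Rightarrow> trm" where
  "lower c (Var i) = (if i < c then Var i else Var (i - 1))"
| "lower c (Lam t) = Lam (lower (Suc c) t)"
| "lower c (App t u) = App (lower c t) (lower c u)"
| "lower c (Sub t u) = Sub (lower (Suc c) t) (lower c u)"

fun occ :: "nat \<Rightarrow> trm \<Rightarrow> bool" where
  "occ c (Var i) = (i = c)"
| "occ c (Lam t) = occ (Suc c) t"
| "occ c (App t u) = (occ c t \<or> occ c u)"
| "occ c (Sub t u) = (occ (Suc c) t \<or> occ c u)"

definition closed :: "trm \<Rightarrow> bool" where
  "closed t \<longleftrightarrow> (\<forall>i. \<not> occ i t)"

fun is_value :: "trm \<Rightarrow> bool" where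
  "is_value (Lam t) = True"
| "is_value _ = False"

text \<open>Substitution contexts S: a list [u1,...,un] denotes
  <.>[xn\un]...[x1\u1] (head = outermost substitution).\<close>
fun plugS :: "trm list \<Rightarrow> trm \<Rightarrow> trm" where
  "plugS [] t = t"
| "plugS (u # us) t = Sub (plugS us t) u"

datatype wctx =
    WHole
  | WAppL wctx trm
  | WAppR trm wctx
  | WSubR trm wctx
  | WSubL wctx trm

fun plugW :: "wctx \<Rightarrow> trm \<Rightarrow> trm" where
  "plugW WHole s = s"
| "plugW (WAppL W t) s = App (plugW W s) t"
| "plugW (WAppR t W) s = App t (plugW W s)"
| "plugW (WSubR t W) s = Sub t (plugW W s)"
| "plugW (WSubL W u) s = Sub (plugW W s) u"

fun depthW :: "wctx \<Rightarrow> nat" where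
  "depthW WHole = 0"
| "depthW (WAppL W t) = depthW W"
| "depthW (WAppR t W) = depthW W"
| "depthW (WSubR t W) = depthW W"
| "depthW (WSubL W u) = Suc (depthW W)"

fun compW :: "wctx \<Rightarrow> wctx \<Rightarrow> wctx" where
  "compW WHole K = K"
| "compW (WAppL W t) K = WAppL (compW W K) t"
| "compW (WAppR t W) K = WAppR t (compW W K)"
| "compW (WSubR t W) K = WSubR t (compW W K)"
| "compW (WSubL W u) K = WSubL (compW W K) u"

fun is_answer :: "trm \<Rightarrow> bool" where
  "is_answer (Lam t) = True"
| "is_answer (Sub a a') = (is_answer a \<and> is_answer a')"
| "is_answer _ = False"

fun strict_answer :: "trm \<Rightarrow> bool" where
  "strict_answer (Lam t) = True"
| "strict_answer (Sub a a') = (strict_answer a \<and> strict_answer a' \<and> occ 0 a)"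
| "strict_answer _ = False"

fun is_N :: "wctx \<Rightarrow> bool" where
  "is_N WHole = True"
| "is_N (WAppL N t) = is_N N"
| "is_N (WSubL N t) = is_N N"
| "is_N _ = False"

fun is_A :: "wctx \<Rightarrow> bool" where
  "is_A WHole = True"
| "is_A (WSubR a A) = (is_answer a \<and> is_A A)"
| "is_A (WSubL A t) = is_A A"
| "is_A _ = False"

definition is_Y :: "wctx \<Rightarrow> bool" where
  "is_Y Y \<longleftrightarrow> (\<exists>A N. is_A A \<and> is_N N \<and> Y = compW A N)"

definition is_W :: "wctx \<Rightarrow> bool" where
  "is_W W \<longleftrightarrow> True"

inductive root_m :: "trm \<Rightarrow> trm \<Rightarrow> bool" where
  "root_m (App (plugS S (Lam t)) u) (plugS S (Sub t (lift (length S) 0 u)))"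

text \<open>K<<x>>[x\u] -> K<<u>>[x\u] for K in the class P.\<close>
inductive root_e :: "(wctx \<Rightarrow> bool) \<Rightarrow> trm \<Rightarrow> trm \<Rightarrow> bool" for P where
  "P K \<Longrightarrow> root_e P (Sub (plugW K (Var (depthW K))) u)
                     (Sub (plugW K (lift (Suc (depthW K)) 0 u)) u)"

inductive root_gcv :: "trm \<Rightarrow> trm \<Rightarrow> bool" where
  "is_value v \<Longrightarrow> \<not> occ 0 t \<Longrightarrow>
   root_gcv (Sub t (plugS S v)) (plugS S (lift (length S) 0 (lower 0 t)))"

inductive ctx_closure :: "(wctx \<Rightarrow> bool) \<Rightarrow> (trm \<Rightarrow> trm \<Rightarrow> bool) \<Rightarrow> trm \<Rightarrow> trm \<Rightarrow> bool"
  for P R where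
  "P C \<Longrightarrow> R t t' \<Longrightarrow> ctx_closure P R (plugW C t) (plugW C t')"

definition w_step :: "trm \<Rightarrow> trm \<Rightarrow> bool" where
  "w_step t t' \<longleftrightarrow> ctx_closure is_W root_m t t' \<or> ctx_closure is_W (root_e is_W) t t'
                    \<or> ctx_closure is_W root_gcv t t'"

definition y_step :: "trm \<Rightarrow> trm \<Rightarrow> bool" where
  "y_step t t' \<longleftrightarrow> ctx_closure is_Y root_m t t' \<or> ctx_closure is_A (root_e is_Y) t t'
                    \<or> ctx_closure is_Y (root_e is_N) t t' \<or> ctx_closure is_Y root_gcv t t'"

end

theory Submission
  imports Defs
begin

text \<open>Silly steps are computed by a function telling whether a term makes a silly step, is stuck
  on a free variable, or is normal, which in auxiliary position means a strict answer; closed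
  terms are never stuck. Weak steps are instances of a parallel weak reduction \<open>t \<Rightarrow>\<^sup>n t'\<close> that
  counts its steps. The key lemma closes the square formed by a silly step \<open>t \<rightarrow> t'\<close> and
  \<open>t \<Rightarrow>\<^sup>n t\<^sub>a\<close>: either the silly step is one of the \<open>n\<close> steps and \<open>t' \<Rightarrow>\<^sup>n\<^sup>-\<^sup>1 t\<^sub>a\<close>, or \<open>t\<^sub>a\<close>
  makes a silly step to \<open>t\<^sub>b\<close> and \<open>t' \<Rightarrow>\<^sup>m t\<^sub>b\<close> with \<open>m \<ge> n\<close>. So silly reduction never loses
  work: by induction on the number of silly steps from \<open>t\<^sub>a\<close> to the strict answer and on \<open>n\<close>,
  the term \<open>t\<close> needs at least \<open>n\<close> more of them, and iterating along the weak reduction gives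
  the theorem.\<close>

section \<open>De Bruijn indices\<close>

lemma occ_lift: "occ j (lift k c u) \<longleftrightarrow> (j < c \<and> occ j u) \<or> (c + k \<le> j \<and> occ (j - k) u)"
  by (induction u arbitrary: j c) (auto simp: Suc_diff_le)

lemma occ_lower:
  "\<not> occ c u \<Longrightarrow> occ j (lower c u) \<longleftrightarrow> (j < c \<and> occ j u) \<or> (c \<le> j \<and> occ (Suc j) u)"
  by (induction u arbitrary: j c) (auto simp: Suc_diff_le)

lemma lift_0 [simp]: "lift 0 c u = u"
  by (induction u arbitrary: c) auto

lemma lift_lift_swap: "c0 \<le> c \<Longrightarrow> lift k (c + m) (lift m c0 u) = lift m c0 (lift k c u)"
  by (induction u arbitrary: c c0) (auto simp flip: add_Suc)

lemma lift_lift_merge: "c0 \<le> c \<Longrightarrow> c \<le> c0 + m \<Longrightarrow> lift k c (lift m c0 u) = lift (m + k) c0 u"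
  by (induction u arbitrary: c c0) auto

lemma lower_lift_merge: "c0 \<le> c \<Longrightarrow> c < c0 + k \<Longrightarrow> lower c (lift k c0 u) = lift (k - 1) c0 u"
  by (induction u arbitrary: c c0) auto

lemma lower_lift_cancel [simp]: "lower c (lift (Suc 0) c u) = u"
  using lower_lift_merge[of c c "Suc 0" u] by simp

lemma lower_lift_swap:
  "\<not> occ c u \<Longrightarrow> c0 \<le> c \<Longrightarrow> lower (c + m) (lift m c0 u) = lift m c0 (lower c u)"
  by (induction u arbitrary: c c0) (auto simp flip: add_Suc)

lemma lift_lower_swap:
  "\<not> occ c0 u \<Longrightarrow> c0 \<le> c \<Longrightarrow> lower c0 (lift k (Suc c) u) = lift k c (lower c0 u)"
  by (induction u arbitrary: c c0) auto

lemma lower_lower_swap: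
  "\<not> occ c0 u \<Longrightarrow> \<not> occ (Suc c) u \<Longrightarrow> c0 \<le> c \<Longrightarrow> lower c (lower c0 u) = lower c0 (lower (Suc c) u)"
  by (induction u arbitrary: c c0) auto

fun liftW :: "nat \<Rightarrow> nat \<Rightarrow> wctx \<Rightarrow> wctx" where
  "liftW k c WHole = WHole"
| "liftW k c (WAppL K t) = WAppL (liftW k c K) (lift k c t)"
| "liftW k c (WAppR t K) = WAppR (lift k c t) (liftW k c K)"
| "liftW k c (WSubR t K) = WSubR (lift k (Suc c) t) (liftW k c K)"
| "liftW k c (WSubL K u) = WSubL (liftW k (Suc c) K) (lift k c u)"

fun lowerW :: "nat \<Rightarrow> wctx \<Rightarrow> wctx" where
  "lowerW c WHole = WHole"
| "lowerW c (WAppL K t) = WAppL (lowerW c K) (lower c t)"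
| "lowerW c (WAppR t K) = WAppR (lower c t) (lowerW c K)"
| "lowerW c (WSubR t K) = WSubR (lower (Suc c) t) (lowerW c K)"
| "lowerW c (WSubL K u) = WSubL (lowerW (Suc c) K) (lower c u)"

fun occW :: "nat \<Rightarrow> wctx \<Rightarrow> bool" where
  "occW c WHole = False"
| "occW c (WAppL K t) = (occW c K \<or> occ c t)"
| "occW c (WAppR t K) = (occ c t \<or> occW c K)"
| "occW c (WSubR t K) = (occ (Suc c) t \<or> occW c K)"
| "occW c (WSubL K u) = (occW (Suc c) K \<or> occ c u)"

lemma depthW_liftW [simp]: "depthW (liftW k c K) = depthW K"
  by (induction K arbitrary: c) auto

lemma depthW_lowerW [simp]: "depthW (lowerW c K) = depthW K"
  by (induction K arbitrary: c) auto

lemma is_N_liftW [simp]: "is_N (liftW k c K) = is_N K"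
  by (induction K arbitrary: c) auto

lemma is_N_lowerW [simp]: "is_N (lowerW c K) = is_N K"
  by (induction K arbitrary: c) auto

lemma lift_plugW: "lift k c (plugW K s) = plugW (liftW k c K) (lift k (c + depthW K) s)"
  by (induction K arbitrary: c) auto

lemma lower_plugW: "lower c (plugW K s) = plugW (lowerW c K) (lower (c + depthW K) s)"
  by (induction K arbitrary: c) auto

lemma occ_plugW: "occ c (plugW K s) \<longleftrightarrow> occW c K \<or> occ (c + depthW K) s"
  by (induction K arbitrary: c) auto

lemma plugW_compW: "plugW (compW C K) s = plugW C (plugW K s)"
  by (induction C) auto

text \<open>\<open>fillW K i w\<close> is \<open>K\<langle>w\<rangle>\<close>, where \<open>w\<close> is the content of the substitution binding the
  variable of index \<open>i\<close> outside \<open>K\<close>.\<close>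

definition fillW :: "wctx \<Rightarrow> nat \<Rightarrow> trm \<Rightarrow> trm" where
  "fillW K i w = plugW K (lift (Suc (i + depthW K)) 0 w)"

lemma fillW_simps [simp]:
  "fillW WHole i w = lift (Suc i) 0 w"
  "fillW (WAppL K q) i w = App (fillW K i w) q"
  "fillW (WSubL K u) i w = Sub (fillW K (Suc i) w) u"
  "fillW (WSubR c K) i w = Sub c (fillW K i w)"
  by (simp_all add: fillW_def)

section \<open>Substitution spines\<close>

fun is_sub_value :: "trm \<Rightarrow> bool" where
  "is_sub_value (Lam b) = True"
| "is_sub_value (Sub s w) = is_sub_value s"
| "is_sub_value _ = False"

fun spine_length :: "trm \<Rightarrow> nat" where
  "spine_length (Sub s w) = Suc (spine_length s)"
| "spine_length _ = 0"

fun m_contract :: "trm \<Rightarrow> trm \<Rightarrow> trm" where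
  "m_contract (Lam b) u = Sub b u"
| "m_contract (Sub s w) u = Sub (m_contract s (lift 1 0 u)) w"
| "m_contract x u = App x u"

fun gc_contract :: "trm \<Rightarrow> trm \<Rightarrow> trm" where
  "gc_contract y (Sub s w) = Sub (gc_contract (lift 1 0 y) s) w"
| "gc_contract y _ = y"

fun gc_contractW :: "wctx \<Rightarrow> trm \<Rightarrow> wctx" where
  "gc_contractW K (Sub s w) = WSubL (gc_contractW (liftW 1 0 K) s) w"
| "gc_contractW K _ = K"

lemma is_sub_value_iff_plugS: "is_sub_value x \<longleftrightarrow> (\<exists>S b. x = plugS S (Lam b))"
proof
  assume "is_sub_value x" then show "\<exists>S b. x = plugS S (Lam b)"
  proof (induction x)
    case (Lam b) then show ?case by (metis plugS.simps(1))
  next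
    case (Sub s w)
    then obtain S b where "s = plugS S (Lam b)" by auto
    then have "Sub s w = plugS (w # S) (Lam b)" by simp
    then show ?case by blast
  qed auto
next
  assume "\<exists>S b. x = plugS S (Lam b)"
  then obtain S b where "x = plugS S (Lam b)" by blast
  then show "is_sub_value x" by (induction S arbitrary: x) auto
qed

lemma is_sub_value_lift [simp]: "is_sub_value (lift k c u) = is_sub_value u"
  by (induction u arbitrary: c) auto

lemma is_sub_value_lower [simp]: "is_sub_value (lower c u) = is_sub_value u"
  by (induction u arbitrary: c) auto

lemma is_sub_value_gc_contract [simp]: "is_sub_value (gc_contract y u) = is_sub_value y"
  by (induction y u rule: gc_contract.induct) auto

lemma is_N_not_sub_value: "is_N K \<Longrightarrow> \<not> is_sub_value (plugW K (Var j))"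
  by (induction K) auto

lemma depthW_gc_contractW [simp]: "depthW (gc_contractW K u) = depthW K + spine_length u"
  by (induction u arbitrary: K) auto

lemma is_N_gc_contractW [simp]: "is_N (gc_contractW K u) = is_N K"
  by (induction K u rule: gc_contractW.induct) auto

lemma m_contract_plugS: "m_contract (plugS S (Lam b)) u = plugS S (Sub b (lift (length S) 0 u))"
  by (induction S arbitrary: u) (auto simp: lift_lift_merge)

lemma gc_contract_plugS: "gc_contract y (plugS S (Lam b)) = plugS S (lift (length S) 0 y)"
  by (induction S arbitrary: y) (auto simp: lift_lift_merge)

lemma lift_m_contract: "lift k c (m_contract x u) = m_contract (lift k c x) (lift k c u)"
  by (induction x u arbitrary: c rule: m_contract.induct)
     (auto simp: lift_lift_swap[of 0 _ _ 1, simplified])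

lemma lift_gc_contract: "lift k c (gc_contract y u) = gc_contract (lift k c y) (lift k c u)"
  by (induction y u arbitrary: c rule: gc_contract.induct)
     (auto simp: lift_lift_swap[of 0 _ _ 1, simplified])

lemma lower_m_contract:
  "\<not> occ c x \<Longrightarrow> \<not> occ c u \<Longrightarrow> lower c (m_contract x u) = m_contract (lower c x) (lower c u)"
  by (induction x u arbitrary: c rule: m_contract.induct)
     (auto simp: occ_lift lower_lift_swap[of _ _ 0 1, simplified])

lemma lower_gc_contract:
  "\<not> occ c y \<Longrightarrow> \<not> occ c u \<Longrightarrow> lower c (gc_contract y u) = gc_contract (lower c y) (lower c u)"
  by (induction y u arbitrary: c rule: gc_contract.induct)
     (auto simp: occ_lift lower_lift_swap[of _ _ 0 1, simplified])

lemma occ_m_contract [simp]: "occ j (m_contract x u) \<longleftrightarrow> occ j x \<or> occ j u"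
  by (induction x u arbitrary: j rule: m_contract.induct) (auto simp: occ_lift)

lemma occ_gc_contract: "occ j (gc_contract y u) \<Longrightarrow> occ j u \<or> occ j y"
proof (induction y u arbitrary: j rule: gc_contract.induct)
  case (1 y s w)
  then show ?case using "1.IH"[of "Suc j"] by (auto simp: occ_lift)
qed auto

lemma gc_contract_assoc: "gc_contract (gc_contract x u) v = gc_contract x (gc_contract u v)"
  by (induction u v arbitrary: x rule: gc_contract.induct) (auto simp: lift_gc_contract)

lemma gc_contract_m_contract: "gc_contract (m_contract x u) v = m_contract (gc_contract x v) u"
  by (induction v arbitrary: x u) (auto simp: lift_m_contract)

lemma gc_contract_plugW:
  "gc_contract (plugW K y) u = plugW (gc_contractW K u) (lift (spine_length u) (depthW K) y)"
proof (induction u arbitrary: K y)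
  case (Sub s w)
  have "lift (spine_length s) (depthW K) (lift 1 (depthW K) y) = lift (Suc (spine_length s)) (depthW K) y"
    by (simp add: lift_lift_merge)
  then show ?case using Sub.IH(1) by (simp add: lift_plugW)
qed auto

section \<open>The silly strategy as a function\<close>

datatype outcome = Step trm | Stuck wctx nat | Normal

text \<open>The flag records whether the term sits in an auxiliary context (then only strict answers
  are normal) or in a name context (then every \<open>S\<langle>v\<rangle>\<close> is). \<open>Stuck K i\<close> means that the term is
  \<open>K\<langle>\<langle>x\<rangle>\<rangle>\<close> for the free variable \<open>x\<close> of index \<open>i\<close>, counted outside \<open>K\<close>.\<close>

fun silly :: "bool \<Rightarrow> trm \<Rightarrow> outcome" where
  "silly aux (Var i) = Stuck WHole i"
| "silly aux (Lam b) = Normal"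
| "silly aux (App p q) =
     (case silly False p of
        Step p' \<Rightarrow> Step (App p' q)
      | Stuck K i \<Rightarrow> Stuck (WAppL K q) i
      | Normal \<Rightarrow> Step (m_contract p q))"
| "silly aux (Sub b u) =
     (case silly aux b of
        Step b' \<Rightarrow> Step (Sub b' u)
      | Stuck K i \<Rightarrow>
          (case i of
             0 \<Rightarrow> Step (Sub (fillW K 0 u) u)
           | Suc j \<Rightarrow> Stuck (WSubL K u) j)
      | Normal \<Rightarrow>
          (if \<not> aux then Normal
           else if \<not> occ 0 b \<and> is_sub_value u then Step (gc_contract (lower 0 b) u)
           else (case silly True u of
                   Step u' \<Rightarrow> Step (Sub b u')
                 | Stuck K i \<Rightarrow> Stuck (WSubR b K) i
                 | Normal \<Rightarrow> Normal)))"

lemma strict_answer_is_sub_value: "strict_answer x \<Longrightarrow> is_sub_value x"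
  by (induction x) auto

lemma strict_answer_is_answer: "strict_answer x \<Longrightarrow> is_answer x"
  by (induction x) auto

lemma silly_False_Normal_iff: "silly False x = Normal \<longleftrightarrow> is_sub_value x"
  by (induction x) (auto split: outcome.split nat.split)

lemma silly_True_Normal_iff: "silly True x = Normal \<longleftrightarrow> strict_answer x"
proof
  show "silly True x = Normal \<Longrightarrow> strict_answer x"
    by (induction x) (auto split: outcome.splits nat.splits if_splits dest: strict_answer_is_sub_value)
  show "strict_answer x \<Longrightarrow> silly True x = Normal"
    by (induction x) auto
qed

lemma silly_Stuck_plugW: "silly aux x = Stuck K i \<Longrightarrow> x = plugW K (Var (i + depthW K))"
  by (induction x arbitrary: aux K i)
     (auto split: outcome.splits nat.splits if_splits, fastforce)

lemma silly_Stuck_occ: "silly aux x = Stuck K i \<Longrightarrow> occ i x"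
  by (drule silly_Stuck_plugW) (simp add: occ_plugW)

lemma silly_Stuck_is_N: "silly aux x = Stuck K i \<Longrightarrow> \<not> aux \<or> \<not> is_sub_value x \<Longrightarrow> is_N K"
  by (induction x arbitrary: aux K i)
     (auto split: outcome.splits nat.splits if_splits
        simp: silly_True_Normal_iff dest: strict_answer_is_sub_value)

lemma is_Y_if_is_N: "is_N N \<Longrightarrow> is_Y N"
  unfolding is_Y_def by (rule exI[of _ WHole]) auto

lemma is_Y_WSubL: "is_Y Y \<Longrightarrow> is_Y (WSubL Y u)"
proof -
  assume "is_Y Y"
  then obtain A N where "is_A A" "is_N N" "Y = compW A N" unfolding is_Y_def by blast
  then have "is_A (WSubL A u) \<and> is_N N \<and> WSubL Y u = compW (WSubL A u) N" by simp
  then show ?thesis unfolding is_Y_def by blast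
qed

lemma is_Y_WSubR: "is_Y Y \<Longrightarrow> is_answer b \<Longrightarrow> is_Y (WSubR b Y)"
proof -
  assume "is_Y Y" "is_answer b"
  then obtain A N where "is_A A" "is_N N" "Y = compW A N" unfolding is_Y_def by blast
  then have "is_A (WSubR b A) \<and> is_N N \<and> WSubR b Y = compW (WSubR b A) N"
    using \<open>is_answer b\<close> by simp
  then show ?thesis unfolding is_Y_def by blast
qed

lemma silly_Stuck_is_Y: "silly True x = Stuck K i \<Longrightarrow> is_Y K"
proof (induction x arbitrary: K i)
  case (App p q)
  then show ?case by (auto split: outcome.splits intro!: is_Y_if_is_N dest: silly_Stuck_is_N)
next
  case (Sub b u)
  then show ?case
    by (auto split: outcome.splits nat.splits if_splits intro: is_Y_WSubL is_Y_WSubR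
        simp: silly_True_Normal_iff dest: strict_answer_is_answer)
qed (auto intro: is_Y_if_is_N)

fun lift_outcome :: "nat \<Rightarrow> nat \<Rightarrow> outcome \<Rightarrow> outcome" where
  "lift_outcome k c (Step s) = Step (lift k c s)"
| "lift_outcome k c (Stuck K i) = Stuck (liftW k c K) (if i < c then i else i + k)"
| "lift_outcome k c Normal = Normal"

fun lower_outcome :: "nat \<Rightarrow> outcome \<Rightarrow> outcome" where
  "lower_outcome c (Step s) = Step (lower c s)"
| "lower_outcome c (Stuck K i) = Stuck (lowerW c K) (if i < c then i else i - 1)"
| "lower_outcome c Normal = Normal"

lemma silly_lift: "silly aux (lift k c x) = lift_outcome k c (silly aux x)"
proof (induction x arbitrary: aux c)
  case (App p q)
  then show ?case by (auto split: outcome.splits simp: lift_m_contract)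
next
  case (Sub b u)
  have "lift k (Suc (c + d)) (lift (Suc d) 0 u) = lift (Suc d) 0 (lift k c u)" for d
    using lift_lift_swap[of 0 c k "Suc d" u] by simp
  moreover have "occ 0 (lift k (Suc c) b) = occ 0 b"
    by (simp add: occ_lift)
  ultimately show ?case using Sub
    by (auto split: outcome.splits nat.splits if_splits
        simp: fillW_def lift_plugW lift_gc_contract lift_lower_swap)
qed auto

lemma silly_lower: "\<not> occ c x \<Longrightarrow> silly aux (lower c x) = lower_outcome c (silly aux x)"
proof (induction x arbitrary: aux c)
  case (App p q)
  then show ?case by (auto split: outcome.splits simp: lower_m_contract)
next
  case (Sub b u)
  have nb: "\<not> occ (Suc c) b" and nu: "\<not> occ c u" using Sub.prems by auto
  note IH_b = Sub.IH(1)[OF nb]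
  show ?case
  proof (cases "silly aux b")
    case (Step s)
    then show ?thesis using IH_b by simp
  next
    case (Stuck K i)
    then have "i \<noteq> Suc c" using nb silly_Stuck_occ by blast
    moreover have "lower (Suc (c + d)) (lift (Suc d) 0 u) = lift (Suc d) 0 (lower c u)" for d
      using lower_lift_swap[of c u 0 "Suc d"] nu by simp
    ultimately show ?thesis using Stuck IH_b
      by (cases i) (auto simp: fillW_def lower_plugW split: nat.split)
  next
    case Normal
    have occ_0: "occ 0 (lower (Suc c) b) = occ 0 b" using nb by (simp add: occ_lower)
    show ?thesis
    proof (cases "aux \<and> \<not> occ 0 b \<and> is_sub_value u")
      case True
      have "lower c (gc_contract (lower 0 b) u) = gc_contract (lower c (lower 0 b)) (lower c u)"
        using nb nu True by (simp add: occ_lower lower_gc_contract)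
      also have "lower c (lower 0 b) = lower 0 (lower (Suc c) b)"
        using nb True by (simp add: lower_lower_swap)
      finally show ?thesis using True Normal IH_b occ_0 by simp
    next
      case False
      then show ?thesis using Normal IH_b occ_0 Sub.IH(2)[OF nu, of True]
        by (auto split: outcome.splits)
    qed
  qed
qed auto

lemma silly_gc_contract_Step:
  "silly aux x = Step s \<Longrightarrow> silly aux (gc_contract x u) = Step (gc_contract s u)"
  by (induction u arbitrary: x s) (auto simp: silly_lift)

lemma silly_gc_contract_Stuck:
  "silly aux x = Stuck K i \<Longrightarrow> silly aux (gc_contract x u) = Stuck (gc_contractW K u) i"
  by (induction u arbitrary: x K i) (auto simp: silly_lift)

section \<open>Soundness of the silly function\<close>

lemma ctx_closure_root: "P WHole \<Longrightarrow> R x y \<Longrightarrow> ctx_closure P R x y"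
  using ctx_closure.intros[of P WHole R x y] by simp

lemma ctx_closure_compW:
  "ctx_closure P R x y \<Longrightarrow> (\<And>K. P K \<Longrightarrow> P' (compW C K)) \<Longrightarrow>
   ctx_closure P' R (plugW C x) (plugW C y)"
proof (induction rule: ctx_closure.induct)
  case (1 K t t')
  then have "ctx_closure P' R (plugW (compW C K) t) (plugW (compW C K) t')"
    by (intro ctx_closure.intros) auto
  then show ?case by (simp add: plugW_compW)
qed

lemma ctx_closure_mono:
  "ctx_closure P R x y \<Longrightarrow> (\<And>K. P K \<Longrightarrow> Q K) \<Longrightarrow> (\<And>x y. R x y \<Longrightarrow> R' x y) \<Longrightarrow>
   ctx_closure Q R' x y"
  by (induction rule: ctx_closure.induct) (simp add: ctx_closure.intros)

lemma root_e_mono: "root_e P x y \<Longrightarrow> (\<And>K. P K \<Longrightarrow> Q K) \<Longrightarrow> root_e Q x y"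
  by (induction rule: root_e.induct) (simp add: root_e.intros)

lemma root_m_m_contract: "is_sub_value x \<Longrightarrow> root_m (App x u) (m_contract x u)"
  by (auto simp: is_sub_value_iff_plugS m_contract_plugS intro: root_m.intros)

lemma root_gcv_gc_contract:
  "is_sub_value u \<Longrightarrow> \<not> occ 0 b \<Longrightarrow> root_gcv (Sub b u) (gc_contract (lower 0 b) u)"
proof -
  assume "is_sub_value u" "\<not> occ 0 b"
  then obtain S v where "u = plugS S (Lam v)" by (auto simp: is_sub_value_iff_plugS)
  then show ?thesis using \<open>\<not> occ 0 b\<close> root_gcv.intros[of "Lam v" b S]
    by (simp add: gc_contract_plugS)
qed

definition n_step :: "trm \<Rightarrow> trm \<Rightarrow> bool" where
  "n_step t t' \<longleftrightarrow> ctx_closure is_N root_m t t' \<or> ctx_closure is_N (root_e is_N) t t'"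

definition silly_step :: "trm \<Rightarrow> trm \<Rightarrow> bool" where
  "silly_step t t' \<longleftrightarrow> silly True t = Step t'"

lemma n_step_compW:
  "n_step x y \<Longrightarrow> (\<And>K. is_N K \<Longrightarrow> is_N (compW C K)) \<Longrightarrow> n_step (plugW C x) (plugW C y)"
  unfolding n_step_def using ctx_closure_compW by blast

lemma y_step_compW:
  "y_step x y \<Longrightarrow> (\<And>K. is_Y K \<Longrightarrow> is_Y (compW C K)) \<Longrightarrow> (\<And>K. is_A K \<Longrightarrow> is_A (compW C K)) \<Longrightarrow>
   y_step (plugW C x) (plugW C y)"
  unfolding y_step_def using ctx_closure_compW by metis

lemma n_step_y_step: "n_step t t' \<Longrightarrow> y_step t t'"
proof -
  have "ctx_closure is_N R x y \<Longrightarrow> ctx_closure is_Y R x y" for R x y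
    by (erule ctx_closure_mono) (simp_all add: is_Y_if_is_N)
  moreover assume "n_step t t'"
  ultimately show ?thesis unfolding n_step_def y_step_def by blast
qed

lemma y_step_w_step: "y_step t t' \<Longrightarrow> w_step t t'"
proof -
  have "ctx_closure P R x y \<Longrightarrow> ctx_closure is_W R x y" for P R x y
    by (erule ctx_closure_mono) (simp_all add: is_W_def)
  moreover have "ctx_closure P (root_e Q) x y \<Longrightarrow> ctx_closure is_W (root_e is_W) x y" for P Q x y
    by (erule ctx_closure_mono) (auto simp: is_W_def elim: root_e_mono)
  moreover assume "y_step t t'"
  ultimately show ?thesis unfolding y_step_def w_step_def by blast
qed

lemma silly_False_Step_n_step: "silly False t = Step t' \<Longrightarrow> n_step t t'"
proof (induction t arbitrary: t')
  case (App p q)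
  show ?case
  proof (cases "silly False p")
    case (Step p')
    then show ?thesis using App n_step_compW[OF App.IH(1), of p' "WAppL WHole q"] by simp
  next
    case Normal
    then have "t' = m_contract p q" "is_sub_value p"
      using App.prems by (simp, simp add: silly_False_Normal_iff)
    then show ?thesis unfolding n_step_def by (auto intro!: ctx_closure_root root_m_m_contract)
  qed (use App.prems in simp)
next
  case (Sub b u)
  show ?case
  proof (cases "silly False b")
    case (Step b')
    then show ?thesis using Sub n_step_compW[OF Sub.IH(1), of b' "WSubL WHole u"] by simp
  next
    case (Stuck K i)
    then have "is_N K" "b = plugW K (Var (i + depthW K))"
      using silly_Stuck_is_N silly_Stuck_plugW by blast+
    with Stuck Sub.prems show ?thesis
      unfolding n_step_def by (cases i) (auto simp: fillW_def intro!: ctx_closure_root root_e.intros)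
  qed (use Sub.prems in simp)
qed auto

lemma silly_step_y_step: "silly_step t t' \<Longrightarrow> y_step t t'"
  unfolding silly_step_def
proof (induction t arbitrary: t')
  case (App p q)
  then show ?case using silly_False_Step_n_step n_step_y_step by simp
next
  case (Sub b u)
  show ?case
  proof (cases "silly True b")
    case (Step b')
    then show ?thesis
      using Sub y_step_compW[OF Sub.IH(1), of b' "WSubL WHole u"] is_Y_WSubL by simp
  next
    case (Stuck K i)
    then have "is_Y K" "b = plugW K (Var (i + depthW K))"
      using silly_Stuck_is_Y silly_Stuck_plugW by blast+
    with Stuck Sub.prems show ?thesis
      unfolding y_step_def by (cases i) (auto simp: fillW_def intro!: ctx_closure_root root_e.intros)
  next
    case Normal
    then have "is_answer b" by (simp add: silly_True_Normal_iff strict_answer_is_answer)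
    show ?thesis
    proof (cases "\<not> occ 0 b \<and> is_sub_value u")
      case True
      then show ?thesis using Sub.prems Normal
        unfolding y_step_def by (auto intro!: ctx_closure_root root_gcv_gc_contract is_Y_if_is_N)
    next
      case False
      then obtain u' where "silly True u = Step u'" "t' = Sub b u'"
        using Sub.prems Normal by (auto split: outcome.splits)
      then show ?thesis using Sub.IH(2) y_step_compW[of u u' "WSubR b WHole"]
        is_Y_WSubR \<open>is_answer b\<close> by simp
    qed
  qed
qed auto

lemma ctx_closure_occ:
  "ctx_closure P R t t' \<Longrightarrow> occ j t' \<Longrightarrow> (\<And>x y j. R x y \<Longrightarrow> occ j y \<Longrightarrow> occ j x) \<Longrightarrow> occ j t"
  by (induction rule: ctx_closure.induct) (auto simp: occ_plugW)

lemma w_step_occ: "w_step t t' \<Longrightarrow> occ j t' \<Longrightarrow> occ j t"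
proof -
  have m: "root_m x y \<Longrightarrow> occ j y \<Longrightarrow> occ j x" for x y j
    by (induction rule: root_m.induct) (auto simp: m_contract_plugS[symmetric])
  have e: "root_e P x y \<Longrightarrow> occ j y \<Longrightarrow> occ j x" for P x y j
    by (induction rule: root_e.induct) (auto simp: occ_plugW occ_lift)
  have gc: "root_gcv x y \<Longrightarrow> occ j y \<Longrightarrow> occ j x" for x y j
  proof (induction rule: root_gcv.induct)
    case (1 v t S)
    then obtain b where "v = Lam b" by (cases v) auto
    then have "plugS S (lift (length S) 0 (lower 0 t)) = gc_contract (lower 0 t) (plugS S v)"
      by (simp add: gc_contract_plugS)
    then show ?case using 1 occ_gc_contract by (fastforce simp: occ_lower)
  qed
  assume "w_step t t'" and occ: "occ j t'"
  then consider "ctx_closure is_W root_m t t'" | "ctx_closure is_W (root_e is_W) t t'"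
    | "ctx_closure is_W root_gcv t t'"
    unfolding w_step_def by blast
  then show ?thesis
  proof cases
    case 1 show ?thesis using 1 occ by (rule ctx_closure_occ) (erule m, assumption)
  next
    case 2 show ?thesis using 2 occ by (rule ctx_closure_occ) (erule e, assumption)
  next
    case 3 show ?thesis using 3 occ by (rule ctx_closure_occ) (erule gc, assumption)
  qed
qed

lemma w_step_closed: "w_step t t' \<Longrightarrow> closed t \<Longrightarrow> closed t'"
  unfolding closed_def using w_step_occ by blast

lemma silly_Step_occ: "silly aux t = Step t' \<Longrightarrow> occ j t' \<Longrightarrow> occ j t"
proof -
  assume "silly aux t = Step t'" "occ j t'"
  moreover have "y_step t t'" if "silly aux t = Step t'"
    using that silly_step_y_step[unfolded silly_step_def] silly_False_Step_n_step n_step_y_step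
    by (cases aux) auto
  ultimately show ?thesis using y_step_w_step w_step_occ by blast
qed

lemma closed_silly_not_Stuck: "closed t \<Longrightarrow> silly aux t \<noteq> Stuck K i"
  unfolding closed_def using silly_Stuck_occ by blast

lemma closed_silly_Step: "closed t \<Longrightarrow> silly aux t = Step t' \<Longrightarrow> closed t'"
  unfolding closed_def using silly_Step_occ by blast

section \<open>Counted parallel weak reduction\<close>

fun env_push :: "trm \<Rightarrow> (nat \<Rightarrow> trm option) \<Rightarrow> nat \<Rightarrow> trm option" where
  "env_push u E 0 = Some u"
| "env_push u E (Suc i) = E i"

fun envW :: "wctx \<Rightarrow> (nat \<Rightarrow> trm option) \<Rightarrow> nat \<Rightarrow> trm option" where
  "envW WHole E = E"
| "envW (WAppL K t) E = envW K E"
| "envW (WAppR t K) E = envW K E"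
| "envW (WSubR t K) E = envW K E"
| "envW (WSubL K u) E = envW K (env_push u E)"

lemma envW_depthW: "envW K E (j + depthW K) = E j"
proof (induction K arbitrary: E j)
  case (WSubL K u)
  have "envW K (env_push u E) (Suc j + depthW K) = env_push u E (Suc j)" by (rule WSubL.IH)
  then show ?case by simp
qed auto

text \<open>\<open>par E t n t'\<close>: a parallel weak reduction of \<open>n\<close> steps. \<open>E i = Some u\<close> means
  that the free variable of index \<open>i\<close> is bound by an enclosing substitution \<open>[x\<setminus>u]\<close>, where \<open>u\<close>
  lives in the scope of that substitution.\<close>

inductive par :: "(nat \<Rightarrow> trm option) \<Rightarrow> trm \<Rightarrow> nat \<Rightarrow> trm \<Rightarrow> bool" where
  par_refl: "par E t 0 t"
| par_m: "is_sub_value x \<Longrightarrow> par E (App x u) 1 (m_contract x u)"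
| par_gc: "is_sub_value u \<Longrightarrow> \<not> occ 0 b \<Longrightarrow> par E (gc_contract (lower 0 b) u) n t' \<Longrightarrow>
    par E (Sub b u) (Suc n) t'"
| par_var: "E i = Some u \<Longrightarrow> par E (Var i) 1 (lift (Suc i) 0 u)"
| par_app: "par E p m p' \<Longrightarrow> par E q n q' \<Longrightarrow> par E (App p q) (m + n) (App p' q')"
| par_sub: "par (env_push u E) b m b' \<Longrightarrow> par E u n u' \<Longrightarrow> par E (Sub b u) (m + n) (Sub b' u')"

lemma par_plugW: "par (envW K E) x n y \<Longrightarrow> par E (plugW K x) n (plugW K y)"
proof (induction K arbitrary: E)
  case (WAppL K t)
  then show ?case using par_app[OF _ par_refl] by fastforce
next
  case (WAppR t K)
  then show ?case using par_app[OF par_refl] by fastforce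
next
  case (WSubR t K)
  then show ?case using par_sub[OF par_refl] by fastforce
next
  case (WSubL K u)
  then show ?case using par_sub[OF _ par_refl] by fastforce
qed simp

lemma w_step_par: "w_step t t' \<Longrightarrow> par E t 1 t'"
proof -
  have ctx: "ctx_closure P R t t' \<Longrightarrow> (\<And>x y E. R x y \<Longrightarrow> par E x 1 y) \<Longrightarrow> par E t 1 t'"
    for P R E t t'
    by (induction rule: ctx_closure.induct) (simp add: par_plugW)
  have m: "root_m x y \<Longrightarrow> par E x 1 y" for x y E
    by (induction rule: root_m.induct) (metis par_m m_contract_plugS is_sub_value_iff_plugS)
  have e: "root_e P x y \<Longrightarrow> par E x 1 y" for P x y E
  proof (induction rule: root_e.induct)
    case (1 K u)
    have "par (envW K (env_push u E)) (Var (depthW K)) 1 (lift (Suc (depthW K)) 0 u)"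
      by (rule par_var) (use envW_depthW[of K "env_push u E" 0] in simp)
    then have "par (env_push u E) (plugW K (Var (depthW K))) 1 (plugW K (lift (Suc (depthW K)) 0 u))"
      by (rule par_plugW)
    then show ?case using par_sub[OF _ par_refl] by fastforce
  qed
  have gc: "root_gcv x y \<Longrightarrow> par E x 1 y" for x y E
  proof (induction rule: root_gcv.induct)
    case (1 v t S)
    then obtain b where "v = Lam b" by (cases v) auto
    then have "is_sub_value (plugS S v)"
      and "gc_contract (lower 0 t) (plugS S v) = plugS S (lift (length S) 0 (lower 0 t))"
      by (auto simp: is_sub_value_iff_plugS gc_contract_plugS)
    then show ?case using par_gc[OF _ 1(2) par_refl] by fastforce
  qed
  assume "w_step t t'"
  then show ?thesis unfolding w_step_def using ctx m e gc by metis
qed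

lemma par_lift:
  "par F x n y \<Longrightarrow> \<forall>j<c. G j = map_option (lift k (c - Suc j)) (F j) \<Longrightarrow> \<forall>j\<ge>c. G (j + k) = F j \<Longrightarrow>
   par G (lift k c x) n (lift k c y)"
proof (induction arbitrary: G c rule: par.induct)
  case (par_m x E u)
  then show ?case using par.par_m[of "lift k c x" G "lift k c u"] by (simp add: lift_m_contract)
next
  case (par_gc u b E n t')
  have "gc_contract (lower 0 (lift k (Suc c) b)) (lift k c u) = lift k c (gc_contract (lower 0 b) u)"
    using par_gc by (simp add: lift_lower_swap lift_gc_contract)
  moreover have "\<not> occ 0 (lift k (Suc c) b)" using par_gc by (simp add: occ_lift)
  ultimately show ?case using par_gc by (auto intro!: par.par_gc)
next
  case (par_var E i u)
  show ?case
  proof (cases "i < c")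
    case True
    then have "par G (Var i) 1 (lift (Suc i) 0 (lift k (c - Suc i) u))"
      by (intro par.par_var) (use par_var in simp)
    moreover have "lift k (c - Suc i + Suc i) (lift (Suc i) 0 u) = lift (Suc i) 0 (lift k (c - Suc i) u)"
      by (rule lift_lift_swap) simp
    ultimately show ?thesis using True by simp
  next
    case False
    then have "par G (Var (i + k)) 1 (lift (Suc (i + k)) 0 u)"
      by (intro par.par_var) (use par_var in simp)
    moreover have "lift k c (lift (Suc i) 0 u) = lift (Suc i + k) 0 u"
      using False by (simp add: lift_lift_merge)
    ultimately show ?thesis using False by simp
  qed
next
  case (par_app E p m p' q n q')
  then show ?case by (simp add: par.par_app)
next
  case (par_sub u E b m b' n u')
  have "env_push (lift k c u) G j = map_option (lift k (Suc c - Suc j)) (env_push u E j)"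
    if "j < Suc c" for j
    using that par_sub.prems by (cases j) auto
  moreover have "env_push (lift k c u) G (j + k) = env_push u E j" if "Suc c \<le> j" for j
    using that par_sub.prems by (cases j) auto
  ultimately have "par (env_push (lift k c u) G) (lift k (Suc c) b) m (lift k (Suc c) b')"
    by (intro par_sub.IH(1)) auto
  then show ?case using par_sub.IH(2)[OF par_sub.prems] by (simp add: par.par_sub)
qed (simp add: par_refl)

lemma par_lift_0: "par F x n y \<Longrightarrow> \<forall>j. G (j + k) = F j \<Longrightarrow> par G (lift k 0 x) n (lift k 0 y)"
  using par_lift[of F x n y 0 G k] by simp

lemma par_lift_env_push: "par E x n y \<Longrightarrow> par (env_push u E) (lift 1 0 x) n (lift 1 0 y)"
  by (rule par_lift_0) auto

lemma strict_answer_par: "par E t n t' \<Longrightarrow> strict_answer t \<Longrightarrow> n = 0 \<and> t' = t"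
  by (induction rule: par.induct) auto

lemma par_is_sub_value: "par E x n y \<Longrightarrow> is_sub_value x \<Longrightarrow> is_sub_value y"
  by (induction rule: par.induct) auto

lemma par_m_contract_right:
  "is_sub_value x \<Longrightarrow> par E u n u' \<Longrightarrow> par E (m_contract x u) n (m_contract x u')"
proof (induction x arbitrary: E u u')
  case (Lam b)
  then show ?case using par_sub[OF par_refl] by fastforce
next
  case (Sub s w)
  then have "par (env_push w E) (m_contract s (lift 1 0 u)) n (m_contract s (lift 1 0 u'))"
    using par_lift_env_push by simp
  then show ?case using par_sub[OF _ par_refl] by fastforce
qed auto

lemma par_m_contract:
  "par E x m x' \<Longrightarrow> is_sub_value x \<Longrightarrow> par E u n u' \<Longrightarrow> par E (m_contract x u) (m + n) (m_contract x' u')"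
proof (induction arbitrary: u n u' rule: par.induct)
  case (par_refl E x)
  then show ?case using par_m_contract_right by simp
next
  case (par_gc w b E m x')
  have "\<not> occ 0 (m_contract b (lift 1 0 u))" using par_gc by (simp add: occ_lift)
  moreover have "gc_contract (lower 0 (m_contract b (lift 1 0 u))) w = m_contract (gc_contract (lower 0 b) w) u"
    using par_gc by (simp add: lower_m_contract occ_lift gc_contract_m_contract)
  ultimately show ?case using par.par_gc[OF par_gc.hyps(1)] par_gc.IH par_gc.prems by simp
next
  case (par_sub w E b m b' k w')
  then have "par (env_push w E) (m_contract b (lift 1 0 u)) (m + n) (m_contract b' (lift 1 0 u'))"
    using par_lift_env_push by simp
  then have "par E (Sub (m_contract b (lift 1 0 u)) w) (m + n + k) (Sub (m_contract b' (lift 1 0 u')) w')"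
    using par_sub.hyps(2) par.par_sub by blast
  then show ?case by (simp add: add.commute add.left_commute)
qed auto

lemma par_gc_contract: "par E u n u' \<Longrightarrow> is_sub_value u \<Longrightarrow> par E (gc_contract x u) n (gc_contract x u')"
proof (induction arbitrary: x rule: par.induct)
  case (par_gc w s E n u')
  have "\<not> occ 0 (gc_contract (lift 1 0 x) s)"
    using par_gc occ_gc_contract by (fastforce simp: occ_lift)
  moreover have "gc_contract (lower 0 (gc_contract (lift 1 0 x) s)) w = gc_contract x (gc_contract (lower 0 s) w)"
    using par_gc by (simp add: lower_gc_contract occ_lift gc_contract_assoc)
  ultimately show ?case using par.par_gc[OF par_gc.hyps(1)] par_gc.IH[of x] par_gc.prems by simp
qed (auto intro: par.intros)

section \<open>Parallel reduction of stuck terms\<close>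

lemma occ_fillW: "\<not> occ 0 (fillW K (Suc i) w) \<longleftrightarrow> \<not> occW 0 K"
  by (simp add: fillW_def occ_plugW occ_lift)

lemma gc_contract_lower_fillW:
  "\<not> occW 0 K \<Longrightarrow>
   gc_contract (lower 0 (fillW K (Suc i) w)) u = fillW (gc_contractW (lowerW 0 K) u) i w"
proof -
  let ?d = "depthW K"
  have "lower ?d (lift (Suc (Suc i + ?d)) 0 w) = lift (Suc i + ?d) 0 w"
    by (simp add: lower_lift_merge)
  moreover have "lift (spine_length u) ?d (lift (Suc i + ?d) 0 w) = lift (Suc i + ?d + spine_length u) 0 w"
    by (simp add: lift_lift_merge)
  ultimately show "\<not> occW 0 K \<Longrightarrow> ?thesis"
    by (simp add: fillW_def lower_plugW gc_contract_plugW add.assoc)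
qed

lemma par_gc_fillW:
  "is_sub_value u \<Longrightarrow> \<not> occW 0 K \<Longrightarrow> par E (fillW (gc_contractW (lowerW 0 K) u) i w) n t' \<Longrightarrow>
   par E (fillW (WSubL K u) i w) (Suc n) t'"
  by (simp add: par_gc occ_fillW gc_contract_lower_fillW[symmetric])

lemma silly_gc_redex_Step:
  "\<not> occ 0 c \<Longrightarrow> silly aux c = Step s \<Longrightarrow>
   silly aux (gc_contract (lower 0 c) u) = Step (gc_contract (lower 0 s) u)"
  by (simp add: silly_lower silly_gc_contract_Step)

lemma silly_gc_redex_Stuck:
  "\<not> occ 0 c \<Longrightarrow> silly aux c = Stuck K (Suc i) \<Longrightarrow>
   silly aux (gc_contract (lower 0 c) u) = Stuck (gc_contractW (lowerW 0 K) u) i"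
  by (simp add: silly_lower silly_gc_contract_Stuck)

text \<open>\<open>ctx_par E i K n K'\<close>: the context \<open>K\<close> reduces in parallel to \<open>K'\<close> in \<open>n\<close> steps,
  uniformly in what fills the hole in place of the variable of index \<open>i\<close>.\<close>

definition ctx_par :: "(nat \<Rightarrow> trm option) \<Rightarrow> nat \<Rightarrow> wctx \<Rightarrow> nat \<Rightarrow> wctx \<Rightarrow> bool" where
  "ctx_par E i K n K' \<longleftrightarrow>
     (\<forall>w m w'. par (\<lambda>j. E (Suc (i + j))) w m w' \<longrightarrow> par E (fillW K i w) (n + m) (fillW K' i w'))"

lemma ctx_par_refl: "ctx_par E i K 0 K"
  unfolding ctx_par_def
proof (intro allI impI)
  fix w m w' assume "par (\<lambda>j. E (Suc (i + j))) w m w'"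
  moreover have "\<forall>j. envW K E (j + Suc (i + depthW K)) = E (Suc (i + j))"
    using envW_depthW[of K E] by (metis add_Suc_right add.commute add.left_commute)
  ultimately show "par E (fillW K i w) (0 + m) (fillW K i w')"
    unfolding fillW_def by (simp add: par_plugW par_lift_0)
qed

lemma ctx_par_WAppL:
  "ctx_par E i K n K' \<Longrightarrow> par E q m q' \<Longrightarrow> ctx_par E i (WAppL K q) (n + m) (WAppL K' q')"
  unfolding ctx_par_def using par_app by (fastforce simp: add.commute add.left_commute)

lemma ctx_par_WSubL:
  "ctx_par (env_push u E) (Suc i) K n K' \<Longrightarrow> par E u m u' \<Longrightarrow>
   ctx_par E i (WSubL K u) (n + m) (WSubL K' u')"
  unfolding ctx_par_def using par_sub by (fastforce simp: add.commute add.left_commute)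

lemma ctx_par_WSubR: "ctx_par E i K n K' \<Longrightarrow> ctx_par E i (WSubR c K) n (WSubR c K')"
  unfolding ctx_par_def using par_sub[OF par_refl] by fastforce

text \<open>What a parallel reduction does to a term stuck on the variable of index \<open>i\<close>: either it
  substitutes that variable, or the result is stuck on it too.\<close>

definition stuck_par :: "(nat \<Rightarrow> trm option) \<Rightarrow> bool \<Rightarrow> wctx \<Rightarrow> nat \<Rightarrow> nat \<Rightarrow> trm \<Rightarrow> bool" where
  "stuck_par E aux K i n t' \<longleftrightarrow>
     (\<exists>w. E i = Some w \<and> 0 < n \<and> par E (fillW K i w) (n - 1) t') \<or>
     (\<exists>K'. silly aux t' = Stuck K' i \<and> (is_N K \<longrightarrow> is_N K') \<and> ctx_par E i K n K')"

lemma stuck_par_WAppL: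
  "stuck_par E False K i n p' \<Longrightarrow> par E q m q' \<Longrightarrow>
   stuck_par E aux (WAppL K q) i (n + m) (App p' q')"
  unfolding stuck_par_def using par_app ctx_par_WAppL by fastforce

lemma stuck_par_WSubL:
  "stuck_par (env_push u E) aux K (Suc i) n c' \<Longrightarrow> par E u m u' \<Longrightarrow>
   stuck_par E aux (WSubL K u) i (n + m) (Sub c' u')"
  unfolding stuck_par_def using par_sub ctx_par_WSubL by fastforce

lemma stuck_par_WSubR:
  assumes "strict_answer c" and "stuck_par E True K i n u'" and "occ 0 c \<or> is_N K"
  shows "stuck_par E True (WSubR c K) i n (Sub c u')"
proof -
  have "silly True (Sub c u') = Stuck (WSubR c K') i"
    if "silly True u' = Stuck K' i" and "is_N K \<longrightarrow> is_N K'" for K'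
  proof -
    have "occ 0 c \<or> \<not> is_sub_value u'"
      using assms(3) that is_N_not_sub_value silly_Stuck_plugW by metis
    then show ?thesis using that assms(1) by (auto simp flip: silly_True_Normal_iff)
  qed
  then show ?thesis
    using assms(2) par_sub[OF par_refl] ctx_par_WSubR unfolding stuck_par_def by fastforce
qed

lemma stuck_par_gc:
  assumes "is_sub_value u" and "\<not> occW 0 K"
    and "stuck_par E aux (gc_contractW (lowerW 0 K) u) i n t'"
  shows "stuck_par E aux (WSubL K u) i (Suc n) t'"
proof -
  have "ctx_par E i (WSubL K u) (Suc n) K'" if "ctx_par E i (gc_contractW (lowerW 0 K) u) n K'" for K'
    using that par_gc_fillW[OF assms(1,2)] unfolding ctx_par_def by simp
  then show ?thesis
    using assms(3) par_gc_fillW[OF assms(1,2)] unfolding stuck_par_def by fastforce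
qed

lemma par_Stuck: "par E t n t' \<Longrightarrow> silly aux t = Stuck K i \<Longrightarrow> stuck_par E aux K i n t'"
proof (induction arbitrary: aux K i rule: par.induct)
  case (par_refl E t)
  then show ?case using ctx_par_refl unfolding stuck_par_def by blast
next
  case (par_m x E u)
  then show ?case by (simp flip: silly_False_Normal_iff)
next
  case (par_gc u c E n t')
  obtain K0 where c: "silly aux c = Stuck K0 (Suc i)" and K: "K = WSubL K0 u"
    using par_gc.prems par_gc.hyps silly_Stuck_occ
    by (cases aux; auto split: outcome.splits nat.splits)
  have "\<not> occW 0 K0"
    using silly_Stuck_plugW[OF c] par_gc.hyps(2) by (simp add: occ_plugW)
  then show ?case
    using K stuck_par_gc par_gc silly_gc_redex_Stuck[OF par_gc.hyps(2) c] by blast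
next
  case (par_var E i u)
  then show ?case unfolding stuck_par_def using par.par_refl by auto
next
  case (par_app E p m p' q n q')
  then show ?case using stuck_par_WAppL by (auto split: outcome.splits)
next
  case (par_sub u E c m c' n u')
  show ?case
  proof (cases "silly aux c")
    case (Stuck K0 j)
    then show ?thesis using par_sub stuck_par_WSubL by (cases j) auto
  next
    case Normal
    then have "aux" "strict_answer c" and not_gc: "occ 0 c \<or> \<not> is_sub_value u"
      using par_sub.prems by (cases aux; auto simp flip: silly_True_Normal_iff split: if_splits)+
    then obtain K1 where u: "silly True u = Stuck K1 i" and K: "K = WSubR c K1"
      using par_sub.prems Normal by (auto split: outcome.splits)
    have "m = 0" "c' = c" using strict_answer_par[OF par_sub.hyps(1)] \<open>strict_answer c\<close> by auto
    moreover have "occ 0 c \<or> is_N K1" using not_gc silly_Stuck_is_N[OF u] by blast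
    ultimately show ?thesis
      using K \<open>aux\<close> \<open>strict_answer c\<close> stuck_par_WSubR par_sub.IH(2)[OF u] by simp
  qed (use par_sub.prems in simp)
qed

section \<open>Silly steps commute with parallel reduction\<close>

lemma stuck_par_sub_value:
  assumes "silly aux c = Stuck K i" and "\<not> aux \<or> \<not> is_sub_value c"
    and "stuck_par E aux K i n c'" and "is_sub_value c'"
  shows "\<exists>w. E i = Some w \<and> 0 < n \<and> par E (fillW K i w) (n - 1) c'"
proof -
  have "is_N K" using silly_Stuck_is_N[OF assms(1,2)] .
  then have "\<not> silly aux c' = Stuck K' i" if "is_N K \<longrightarrow> is_N K'" for K'
    using that assms(4) silly_Stuck_plugW is_N_not_sub_value by metis
  then show ?thesis using assms(3) unfolding stuck_par_def by blast
qed

lemma par_onto_sub_value: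
  "par E u n u' \<Longrightarrow> \<not> is_sub_value u \<Longrightarrow> is_sub_value u' \<Longrightarrow> silly True u = Step s \<Longrightarrow>
   0 < n \<and> par E s (n - 1) u'"
proof (induction arbitrary: s rule: par.induct)
  case (par_m x E u)
  then show ?case by (simp add: par.par_refl flip: silly_False_Normal_iff)
next
  case (par_gc u c E n u')
  have "\<not> is_sub_value c" using par_gc.prems by simp
  then obtain c1 where c: "silly True c = Step c1" and s: "s = Sub c1 u"
    using par_gc.prems par_gc.hyps(2) silly_Stuck_occ
    by (auto simp: silly_True_Normal_iff dest: strict_answer_is_sub_value split: outcome.splits nat.splits)
  have "\<not> occ 0 c1" using silly_Step_occ[OF c] par_gc.hyps(2) by blast
  moreover have "0 < n \<and> par E (gc_contract (lower 0 c1) u) (n - 1) u'"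
    using par_gc.IH par_gc.prems(2) silly_gc_redex_Step[OF par_gc.hyps(2) c] \<open>\<not> is_sub_value c\<close>
    by simp
  ultimately show ?case using s par.par_gc[OF par_gc.hyps(1)] by fastforce
next
  case (par_sub w E c m c' n w')
  have c_c': "\<not> is_sub_value c" "is_sub_value c'" using par_sub.prems by auto
  show ?case
  proof (cases "silly True c")
    case (Step c1)
    then show ?thesis using par_sub par.par_sub[OF _ par_sub.hyps(2)] c_c' by fastforce
  next
    case (Stuck K j)
    then have j: "j = 0" and s: "s = Sub (fillW K 0 w) w"
      using par_sub.prems by (cases j; simp)+
    then have "0 < m \<and> par (env_push w E) (fillW K 0 w) (m - 1) c'"
      using stuck_par_sub_value[OF _ _ par_Stuck[OF par_sub.hyps(1)]] Stuck c_c' by fastforce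
    then show ?thesis using s par.par_sub[OF _ par_sub.hyps(2)] by fastforce
  next
    case Normal
    then show ?thesis
      using c_c' by (simp add: silly_True_Normal_iff strict_answer_is_sub_value)
  qed
qed simp_all

text \<open>\<open>silly_par_join E aux t' n ta\<close> closes the square formed by a silly step \<open>t \<rightarrow> t'\<close>
  and a parallel reduction of \<open>t\<close> to \<open>ta\<close> in \<open>n\<close> steps.\<close>

definition silly_par_join :: "(nat \<Rightarrow> trm option) \<Rightarrow> bool \<Rightarrow> trm \<Rightarrow> nat \<Rightarrow> trm \<Rightarrow> bool" where
  "silly_par_join E aux t' n ta \<longleftrightarrow>
     (0 < n \<and> par E t' (n - 1) ta) \<or> (\<exists>tb n'. silly aux ta = Step tb \<and> par E t' n' tb \<and> n \<le> n')"

lemma silly_par_join_gc: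
  "is_sub_value u \<Longrightarrow> \<not> occ 0 s \<Longrightarrow> silly_par_join E aux (gc_contract (lower 0 s) u) n t' \<Longrightarrow>
   silly_par_join E aux (Sub s u) (Suc n) t'"
  unfolding silly_par_join_def using par_gc by fastforce

lemma silly_par_join_WAppL:
  "silly_par_join E False s n p' \<Longrightarrow> par E q m q' \<Longrightarrow>
   silly_par_join E aux (App s q) (n + m) (App p' q')"
  unfolding silly_par_join_def using par_app by fastforce

lemma silly_par_join_WSubL:
  "silly_par_join (env_push u E) aux s n c' \<Longrightarrow> par E u m u' \<Longrightarrow>
   silly_par_join E aux (Sub s u) (n + m) (Sub c' u')"
  unfolding silly_par_join_def using par_sub by fastforce

lemma silly_par_join_WSubR:
  assumes "strict_answer c" and "silly_par_join E True s n u'"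
    and "\<not> occ 0 c \<and> is_sub_value u' \<Longrightarrow> 0 < n \<and> par E s (n - 1) u'"
  shows "silly_par_join E True (Sub c s) n (Sub c u')"
proof (cases "\<not> occ 0 c \<and> is_sub_value u'")
  case True
  then show ?thesis
    using assms(3) par_sub[OF par_refl] unfolding silly_par_join_def by fastforce
next
  case False
  then show ?thesis
    using assms(1,2) par_sub[OF par_refl] unfolding silly_par_join_def
    by (fastforce simp flip: silly_True_Normal_iff)
qed

lemma silly_par_join_e:
  assumes "stuck_par (env_push u E) aux K 0 n c'" and "par E u m u'"
  shows "silly_par_join E aux (Sub (fillW K 0 u) u) (n + m) (Sub c' u')"
  using assms(1) unfolding stuck_par_def
proof (elim disjE exE conjE)
  fix w assume "env_push u E 0 = Some w" and "0 < n" and "par (env_push u E) (fillW K 0 w) (n - 1) c'"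
  then show ?thesis using par_sub[OF _ assms(2)] unfolding silly_par_join_def by fastforce
next
  fix K' assume c': "silly aux c' = Stuck K' 0" and "is_N K \<longrightarrow> is_N K'"
    and "ctx_par (env_push u E) 0 K n K'"
  then have "par (env_push u E) (fillW K 0 u) (n + m) (fillW K' 0 u')"
    using assms(2) unfolding ctx_par_def by simp
  then have "par E (Sub (fillW K 0 u) u) (n + m + m) (Sub (fillW K' 0 u') u')"
    using par_sub[OF _ assms(2)] by blast
  moreover have "silly aux (Sub c' u') = Step (Sub (fillW K' 0 u') u')"
    using c' by simp
  ultimately show ?thesis unfolding silly_par_join_def by fastforce
qed

lemma silly_par_join_Sub:
  assumes c: "par (env_push u E) c m c'" and u: "par E u n u'"
    and IH_c: "\<And>s. silly aux c = Step s \<Longrightarrow> silly_par_join (env_push u E) aux s m c'"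
    and IH_u: "\<And>s. silly True u = Step s \<Longrightarrow> silly_par_join E True s n u'"
    and step: "silly aux (Sub c u) = Step t'"
  shows "silly_par_join E aux t' (m + n) (Sub c' u')"
proof (cases "silly aux c")
  case (Step s)
  then show ?thesis using step IH_c silly_par_join_WSubL[OF _ u] by auto
next
  case (Stuck K j)
  then have "j = 0" and "t' = Sub (fillW K 0 u) u"
    using step by (cases j; simp)+
  then show ?thesis using Stuck silly_par_join_e[OF par_Stuck[OF c] u] by simp
next
  case Normal
  then have "aux" and "strict_answer c" using step by (cases aux; simp add: silly_True_Normal_iff)+
  then have "m = 0" and "c' = c" using strict_answer_par[OF c] by auto
  show ?thesis
  proof (cases "\<not> occ 0 c \<and> is_sub_value u")
    case True
    then have "t' = gc_contract (lower 0 c) u"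
      and "silly aux (Sub c u') = Step (gc_contract (lower 0 c) u')"
      using step Normal \<open>aux\<close> \<open>c' = c\<close> par_is_sub_value[OF u] by simp_all
    then show ?thesis
      using par_gc_contract[OF u] True \<open>m = 0\<close> \<open>c' = c\<close> unfolding silly_par_join_def by fastforce
  next
    case False
    then obtain s where s: "silly True u = Step s" and t': "t' = Sub c s"
      using step Normal \<open>aux\<close> by (auto split: outcome.splits)
    have "0 < n \<and> par E s (n - 1) u'" if "\<not> occ 0 c \<and> is_sub_value u'"
      using that False par_onto_sub_value[OF u _ _ s] by blast
    then show ?thesis
      using silly_par_join_WSubR[OF \<open>strict_answer c\<close> IH_u[OF s]] t' \<open>aux\<close> \<open>m = 0\<close> \<open>c' = c\<close>
      by simp
  qed
qed

lemma par_silly_step_join: "par E t n ta \<Longrightarrow> silly aux t = Step t' \<Longrightarrow> silly_par_join E aux t' n ta"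
proof (induction arbitrary: aux t' rule: par.induct)
  case (par_refl E t)
  then show ?case unfolding silly_par_join_def using par.par_refl by blast
next
  case (par_m x E u)
  then show ?case
    by (simp add: silly_par_join_def par.par_refl flip: silly_False_Normal_iff)
next
  case (par_gc u c E n ta)
  show ?case
  proof (cases "silly aux c")
    case (Step s)
    then have "t' = Sub s u" using par_gc.prems by simp
    moreover have "\<not> occ 0 s" using silly_Step_occ[OF Step] par_gc.hyps(2) by blast
    moreover have "silly_par_join E aux (gc_contract (lower 0 s) u) n ta"
      using par_gc.IH silly_gc_redex_Step[OF par_gc.hyps(2) Step] by blast
    ultimately show ?thesis using silly_par_join_gc[OF par_gc.hyps(1)] by blast
  next
    case Normal
    then show ?thesis
      using par_gc unfolding silly_par_join_def by (cases aux) auto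
  qed (use par_gc silly_Stuck_occ in \<open>auto split: nat.splits\<close>)
next
  case (par_var E i u)
  then show ?case by simp
next
  case (par_app E p m p' q n q')
  show ?case
  proof (cases "silly False p")
    case (Step s)
    then show ?thesis using par_app silly_par_join_WAppL by auto
  next
    case Normal
    then have "is_sub_value p" and "t' = m_contract p q"
      using par_app.prems by (simp add: silly_False_Normal_iff, simp)
    moreover have "silly aux (App p' q') = Step (m_contract p' q')"
      using par_is_sub_value[OF par_app.hyps(1)] \<open>is_sub_value p\<close>
      by (simp flip: silly_False_Normal_iff)
    ultimately show ?thesis
      using par_m_contract[OF par_app.hyps(1) _ par_app.hyps(2)] unfolding silly_par_join_def by fastforce
  qed (use par_app.prems in simp)
next
  case (par_sub u E c m c' n u')
  then show ?case using silly_par_join_Sub by blast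
qed

section \<open>Silly reductions are at least as long\<close>

lemma silly_steps_to_strict_answer_Suc:
  assumes "(silly_step ^^ k) t z" and "strict_answer z" and "silly True t = Step t'"
  shows "\<exists>k'. k = Suc k' \<and> (silly_step ^^ k') t' z"
proof (cases k)
  case 0
  then show ?thesis using assms by (simp flip: silly_True_Normal_iff)
next
  case (Suc k')
  then show ?thesis using assms(1,3) relpowp_Suc_D2 by (fastforce simp: silly_step_def)
qed

lemma silly_steps_after_par:
  assumes "strict_answer z"
  shows "closed t \<Longrightarrow> par (\<lambda>_. None) t n ta \<Longrightarrow> (silly_step ^^ k) ta z \<Longrightarrow>
    \<exists>k'. k + n \<le> k' \<and> (silly_step ^^ k') t z"
proof (induction k arbitrary: t n ta rule: less_induct)
  \<comment> \<open>lexicographically on \<open>(k, n)\<close>: an absorbed silly step lowers \<open>n\<close>, a mirrored one \<open>k\<close>\<close>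
  case (less k)
  note IH_k = less.IH
  from less.prems show ?case
  proof (induction n arbitrary: t ta rule: less_induct)
    case (less n t ta)
    have closed: "closed t" and par: "par (\<lambda>_. None) t n ta" and steps: "(silly_step ^^ k) ta z"
      using less.prems by auto
    show ?case
    proof (cases "silly True t")
      case Normal
      then have "n = 0" and "ta = t"
        using strict_answer_par[OF par] by (auto simp: silly_True_Normal_iff)
      then show ?thesis using steps by auto
    next
      case (Stuck K i)
      then show ?thesis using closed closed_silly_not_Stuck by blast
    next
      case (Step t')
      then have t_t': "silly_step t t'" by (simp add: silly_step_def)
      have "closed t'" using closed closed_silly_Step Step by blast
      from par_silly_step_join[OF par Step]
      consider (absorbed) "0 < n" "par (\<lambda>_. None) t' (n - 1) ta"
        | (mirrored) tb n' where "silly True ta = Step tb" "par (\<lambda>_. None) t' n' tb" "n \<le> n'"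
        unfolding silly_par_join_def by blast
      then show ?thesis
      proof cases
        case absorbed
        then obtain k' where "k + (n - 1) \<le> k'" "(silly_step ^^ k') t' z"
          using less.IH[of "n - 1" t' ta] \<open>closed t'\<close> steps by auto
        then show ?thesis
          using absorbed relpowp_Suc_I2[of silly_step, OF t_t'] by (intro exI[of _ "Suc k'"]) auto
      next
        case mirrored
        then obtain k0 where k: "k = Suc k0" and "(silly_step ^^ k0) tb z"
          using silly_steps_to_strict_answer_Suc steps \<open>strict_answer z\<close> by blast
        then obtain k' where "k0 + n' \<le> k'" "(silly_step ^^ k') t' z"
          using IH_k[of k0 t' n' tb] \<open>closed t'\<close> mirrored(2) by auto
        then show ?thesis
          using k mirrored(3) relpowp_Suc_I2[of silly_step, OF t_t'] by (intro exI[of _ "Suc k'"]) auto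
      qed
    qed
  qed
qed

lemma w_steps_silly_steps:
  "strict_answer a \<Longrightarrow> closed t \<Longrightarrow> (w_step ^^ h) t a \<Longrightarrow> \<exists>k. h \<le> k \<and> (silly_step ^^ k) t a"
proof (induction h arbitrary: t)
  case (Suc h)
  then obtain t1 where t_t1: "w_step t t1" and "(w_step ^^ h) t1 a"
    using relpowp_Suc_D2 by metis
  moreover have "closed t1" using w_step_closed t_t1 Suc.prems(2) by blast
  ultimately obtain k where "h \<le> k" and "(silly_step ^^ k) t1 a" using Suc by blast
  then obtain k' where "k + 1 \<le> k'" and "(silly_step ^^ k') t a"
    using silly_steps_after_par[OF Suc.prems(1,2) w_step_par[OF t_t1]] by blast
  then show ?case using \<open>h \<le> k\<close> by (intro exI[of _ k']) auto
qed (auto intro: relpowp_0_I)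

theorem proposition12p7:
  assumes "closed t" and "(w_step ^^ h) t a" and "strict_answer a"
  shows "\<exists>k. (y_step ^^ k) t a \<and> h \<le> k"
  using w_steps_silly_steps[OF assms(3,1,2)] relpowp_mono[of silly_step y_step] silly_step_y_step
  by blast

end
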